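(* Let $p$ be a prime, $a_1,a_2,a_3\in\mathbb{F}_p$, $s=3+a_1+a_2+a_3$, and let $x\in\mathbb{F}_p^3$ be a solution of \[ x_1^2+x_2^2+x_3^2+a_1x_2x_3+a_2x_1x_3+a_3x_1x_2 = s\,x_1x_2x_3. \] For $k=1,2,3$ let $m_k$ replace $x_k$ by $-x_k + s x_{k-1}x_{k+1} - a_{k+1}x_{k-1} - a_{k-1}x_{k+1}$ (indices modulo $3$), leaving the other coordinates unchanged. If, for some index $i$, $m_{i-1}x = m_{i+1}x = x$, then \[ x_i^2\,(u^2-4)\,(u^2 + a_{i-1}a_{i+1}u + a_{i-1}^2 + a_{i+1}^2 - 4) = 0, \] where $u = s x_i - a_i$. *)

theory Defs
  imports "HOL-Number_Theory.Number_Theory"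
begin

(* Coordinates of F_p^3 are modelled as integers modulo p; indices are 0,1,2
   (paper: 1,2,3), with arithmetic on indices modulo 3. *)

definition nxt :: "nat \<Rightarrow> nat" where "nxt i = (i + 1) mod 3"
definition prv :: "nat \<Rightarrow> nat" where "prv i = (i + 2) mod 3"

definition sval :: "(nat \<Rightarrow> int) \<Rightarrow> int" where
  "sval a = 3 + a 0 + a 1 + a 2"

definition markov_eq :: "int \<Rightarrow> (nat \<Rightarrow> int) \<Rightarrow> (nat \<Rightarrow> int) \<Rightarrow> bool" where
  "markov_eq p a x \<longleftrightarrow>
     [x 0 ^ 2 + x 1 ^ 2 + x 2 ^ 2 + a 0 * x 1 * x 2 + a 1 * x 0 * x 2 + a 2 * x 0 * x 1
       = sval a * x 0 * x 1 * x 2] (mod p)"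

definition mmove :: "(nat \<Rightarrow> int) \<Rightarrow> nat \<Rightarrow> (nat \<Rightarrow> int) \<Rightarrow> (nat \<Rightarrow> int)" where
  "mmove a k x = x(k := - x k + sval a * x (prv k) * x (nxt k)
                         - a (nxt k) * x (prv k) - a (prv k) * x (nxt k))"

definition eqmod3 :: "int \<Rightarrow> (nat \<Rightarrow> int) \<Rightarrow> (nat \<Rightarrow> int) \<Rightarrow> bool" where
  "eqmod3 p x y \<longleftrightarrow> (\<forall>j<3. [x j = y j] (mod p))"

end

theory Submission
  imports Defs
begin

text \<open>With u = s x_i - a_i, y = x_{i+1} and z = x_{i-1}, invariance under m_{i+1} and m_{i-1}
  says 2y = u z - a_{i-1} x_i and 2z = u y - a_{i+1} x_i, a linear system in (y, z) of determinant
  4 - u^2. Subtracting y and z times these relations from twice the Markov equation leaves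
  x_i (2 x_i + a_{i-1} y + a_{i+1} z) = 0; multiplying by 4 - u^2 and substituting Cramer's
  solution gives 2 x_i^2 Q = 0, with Q the last factor of the claim. So for odd p already
  x_i^2 Q = 0, without the factor u^2 - 4; for p = 2 the same follows from a parity check.\<close>

lemma fixed_points_relation_times_two:
  fixes p X Y Z u B C :: int
  assumes markov: "p dvd X^2 + Y^2 + Z^2 - u * Y * Z + B * X * Z + C * X * Y"
    and fix_Y: "p dvd 2 * Y - u * Z + C * X"
    and fix_Z: "p dvd 2 * Z - u * Y + B * X"
  shows "p dvd 2 * (X^2 * (u^2 + C * B * u + C^2 + B^2 - 4))"
proof -
  have cramer_Y: "p dvd (4 - u^2) * Y + (2 * C + u * B) * X"
  proof -
    have "(4 - u^2) * Y + (2 * C + u * B) * X = 2 * (2 * Y - u * Z + C * X) + u * (2 * Z - u * Y + B * X)"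
      by (simp add: algebra_simps power2_eq_square)
    then show ?thesis
      using fix_Y fix_Z by (metis dvd_add dvd_mult)
  qed
  have cramer_Z: "p dvd (4 - u^2) * Z + (2 * B + u * C) * X"
  proof -
    have "(4 - u^2) * Z + (2 * B + u * C) * X = u * (2 * Y - u * Z + C * X) + 2 * (2 * Z - u * Y + B * X)"
      by (simp add: algebra_simps power2_eq_square)
    then show ?thesis
      using fix_Y fix_Z by (metis dvd_add dvd_mult)
  qed
  have linear: "p dvd X * (2 * X + C * Y + B * Z)"
  proof -
    have "X * (2 * X + C * Y + B * Z) = 2 * (X^2 + Y^2 + Z^2 - u * Y * Z + B * X * Z + C * X * Y)
        - Y * (2 * Y - u * Z + C * X) - Z * (2 * Z - u * Y + B * X)"
      by (simp add: algebra_simps power2_eq_square)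
    then show ?thesis
      using markov fix_Y fix_Z by (metis dvd_diff dvd_mult)
  qed
  have "2 * (X^2 * (u^2 + C * B * u + C^2 + B^2 - 4)) = C * X * ((4 - u^2) * Y + (2 * C + u * B) * X)
      + B * X * ((4 - u^2) * Z + (2 * B + u * C) * X) - (4 - u^2) * (X * (2 * X + C * Y + B * Z))"
    by (simp add: algebra_simps power2_eq_square)
  then show ?thesis
    using linear cramer_Y cramer_Z by (metis dvd_add dvd_diff dvd_mult)
qed

lemma fixed_points_relation_mod_two:
  fixes X Y Z u B C :: int
  assumes "even (X^2 + Y^2 + Z^2 - u * Y * Z + B * X * Z + C * X * Y)"
    and "even (2 * Y - u * Z + C * X)"
    and "even (2 * Z - u * Y + B * X)"
  shows "even (X^2 * (u^2 + C * B * u + C^2 + B^2 - 4))"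
  using assms
  by (cases "even X"; cases "even Y"; cases "even Z"; cases "even u"; cases "even B"; cases "even C";
      simp)

lemma fixed_points_relation:
  fixes p X Y Z u B C :: int
  assumes "prime p"
    and "[X^2 + Y^2 + Z^2 - u * Y * Z + B * X * Z + C * X * Y = 0] (mod p)"
    and "[2 * Y = u * Z - C * X] (mod p)"
    and "[2 * Z = u * Y - B * X] (mod p)"
  shows "[X^2 * (u^2 + C * B * u + C^2 + B^2 - 4) = 0] (mod p)"
proof -
  have markov: "p dvd X^2 + Y^2 + Z^2 - u * Y * Z + B * X * Z + C * X * Y"
    using assms(2) by (simp add: cong_0_iff)
  have fix_Y: "p dvd 2 * Y - u * Z + C * X" and fix_Z: "p dvd 2 * Z - u * Y + B * X"
    using assms(3,4) by (simp_all add: cong_iff_dvd_diff algebra_simps)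
  show ?thesis
  proof (cases "p = 2")
    case True
    then show ?thesis
      using fixed_points_relation_mod_two markov fix_Y fix_Z by (simp add: cong_0_iff)
  next
    case False
    then have "\<not> p dvd 2"
      using assms(1) primes_dvd_imp_eq[of p 2] by auto
    then show ?thesis
      using fixed_points_relation_times_two[OF markov fix_Y fix_Z] assms(1)
      by (simp add: cong_0_iff prime_dvd_mult_iff)
  qed
qed

lemma prv_nxt: "i < 3 \<Longrightarrow> prv (nxt i) = i"
  unfolding prv_def nxt_def by presburger

lemma nxt_prv: "i < 3 \<Longrightarrow> nxt (prv i) = i"
  unfolding prv_def nxt_def by presburger

lemma nxt_nxt: "i < 3 \<Longrightarrow> nxt (nxt i) = prv i"
  unfolding prv_def nxt_def by presburger

lemma prv_prv: "i < 3 \<Longrightarrow> prv (prv i) = nxt i"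
  unfolding prv_def nxt_def by presburger

lemma nxt_simps: "nxt 0 = 1" "nxt 1 = 2" "nxt 2 = 0"
  and prv_simps: "prv 0 = 2" "prv 1 = 0" "prv 2 = 1"
  by (simp_all add: nxt_def prv_def)

lemma nxt_less_3: "nxt i < 3" and prv_less_3: "prv i < 3"
  by (simp_all add: nxt_def prv_def)

lemma mmove_fixed_cong:
  assumes "k < 3" and "eqmod3 p (mmove a k x) x"
  shows "[2 * x k = sval a * x (prv k) * x (nxt k) - a (nxt k) * x (prv k) - a (prv k) * x (nxt k)] (mod p)"
proof -
  have "[mmove a k x k = x k] (mod p)"
    using assms unfolding eqmod3_def by blast
  then have "p dvd (- x k + sval a * x (prv k) * x (nxt k) - a (nxt k) * x (prv k) - a (prv k) * x (nxt k)) - x k"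
    by (simp add: mmove_def cong_iff_dvd_diff)
  then show ?thesis
    by (simp add: cong_iff_dvd_diff dvd_diff_commute algebra_simps)
qed

lemma mmove_nxt_fixed_cong:
  assumes "i < 3" and "eqmod3 p (mmove a (nxt i) x) x"
  shows "[2 * x (nxt i) = (sval a * x i - a i) * x (prv i) - a (prv i) * x i] (mod p)"
  using mmove_fixed_cong[OF nxt_less_3 assms(2)] assms(1) by (simp add: prv_nxt nxt_nxt algebra_simps)

lemma mmove_prv_fixed_cong:
  assumes "i < 3" and "eqmod3 p (mmove a (prv i) x) x"
  shows "[2 * x (prv i) = (sval a * x i - a i) * x (nxt i) - a (nxt i) * x i] (mod p)"
  using mmove_fixed_cong[OF prv_less_3 assms(2)] assms(1) by (simp add: nxt_prv prv_prv algebra_simps)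

lemma markov_eq_rotate:
  assumes "markov_eq p a x" and "i < 3"
  shows "[x i^2 + x (nxt i)^2 + x (prv i)^2 - (sval a * x i - a i) * x (nxt i) * x (prv i)
          + a (nxt i) * x i * x (prv i) + a (prv i) * x i * x (nxt i) = 0] (mod p)"
proof -
  have "p dvd x 0 ^ 2 + x 1 ^ 2 + x 2 ^ 2 + a 0 * x 1 * x 2 + a 1 * x 0 * x 2 + a 2 * x 0 * x 1
      - sval a * x 0 * x 1 * x 2"
    using assms(1) unfolding markov_eq_def cong_iff_dvd_diff .
  moreover have "i = 0 \<or> i = 1 \<or> i = 2"
    using assms(2) by auto
  ultimately show ?thesis
    by (elim disjE; simp only: nxt_simps prv_simps; simp add: cong_0_iff algebra_simps)
qed

theorem proposition2p4:
  fixes p :: int and a x :: "nat \<Rightarrow> int" and i :: nat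
  assumes "prime p"
    and "markov_eq p a x"
    and "i < 3"
    and "eqmod3 p (mmove a (prv i) x) x"
    and "eqmod3 p (mmove a (nxt i) x) x"
  shows "[x i ^ 2 * ((sval a * x i - a i) ^ 2 - 4)
          * ((sval a * x i - a i) ^ 2 + a (prv i) * a (nxt i) * (sval a * x i - a i)
             + a (prv i) ^ 2 + a (nxt i) ^ 2 - 4) = 0] (mod p)"
proof -
  define u where "u = sval a * x i - a i"
  have "[x i ^ 2 * (u^2 + a (prv i) * a (nxt i) * u + a (prv i)^2 + a (nxt i)^2 - 4) = 0] (mod p)"
    using fixed_points_relation[OF assms(1) markov_eq_rotate[OF assms(2,3)]
        mmove_nxt_fixed_cong[OF assms(3,5)] mmove_prv_fixed_cong[OF assms(3,4)]]
    unfolding u_def .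
  then have "[x i ^ 2 * (u^2 - 4) * (u^2 + a (prv i) * a (nxt i) * u + a (prv i)^2 + a (nxt i)^2 - 4) = 0] (mod p)"
    unfolding cong_0_iff by (simp add: mult.assoc mult.left_commute[of "x i ^ 2"])
  then show ?thesis
    unfolding u_def .
qed

end
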